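(* Let $\varphi\colon\mathbb{R}\to[0,\infty)$ be a deformed exponential and $\{u_{0,i}\}_{i\ge1}\subset(0,\infty)$. Suppose there do not exist $\alpha\in(0,1)$, $\varepsilon>0$ and a sequence $\{c_i\}\subseteq\mathbb{R}\cup\{-\infty\}$ with $\sum_{i}\varphi(c_i)<\infty$ such that for every $i$, $\alpha\varphi(u)\le\varphi(u-u_{0,i})$ for all real $u>c_i$ with $\varphi(u-u_{0,i})<\varepsilon$. Then there exist pairwise disjoint sets $A_n\subseteq\mathbb{N}$ ($n\ge1$) and real numbers $c_{n,i}$ ($n\ge1$, $i\in A_n$) such that for each $n\ge1$ \[ \frac12\le\sum_{i\in A_n}\varphi(c_{n,i})\qquad\text{and}\qquad\sum_{i\in A_n}\varphi(c_{n,i}-u_{0,i})\le 2^{-n}. \] *)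

theory Defs
  imports "HOL-Analysis.Analysis"
begin

definition deformed_exp :: "(real \<Rightarrow> real) \<Rightarrow> bool" where
  "deformed_exp \<phi> \<longleftrightarrow> (\<forall>u. 0 \<le> \<phi> u) \<and> convex_on UNIV \<phi> \<and>
     (\<phi> \<longlongrightarrow> 0) at_bot \<and> filterlim \<phi> at_top at_top"

definition phi_ext :: "(real \<Rightarrow> real) \<Rightarrow> ereal \<Rightarrow> real" where
  "phi_ext \<phi> x = (if x = - \<infinity> then 0 else \<phi> (real_of_ereal x))"

end

theory Submission
  imports Defs
begin

text \<open>
  Fix \<open>\<delta> \<in> (0,1)\<close> and a finite set \<open>E\<close> of used indices. If no finite block \<open>B\<close> disjoint
  from \<open>E\<close> with \<open>\<Sum>\<phi>(c\<^sub>i) \<ge> 1/2\<close> and \<open>\<Sum>\<phi>(c\<^sub>i - u\<^sub>0\<^sub>,\<^sub>i) \<le> \<delta>\<close> existed, then any choice of points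
  \<open>w\<^sub>i\<close> violating \<open>\<delta>\<phi>(u) \<le> \<phi>(u - u\<^sub>0\<^sub>,\<^sub>i)\<close> (with \<open>\<phi>(w\<^sub>i - u\<^sub>0\<^sub>,\<^sub>i) < \<delta>\<close>), \<open>i \<notin> E\<close>, would have
  \<open>\<Sum>\<phi>(w\<^sub>i) < 1/2\<close>: otherwise a sub-block with sum in \<open>[1/2, 1]\<close> is a block. Taking \<open>c\<^sub>i\<close> to be
  the supremum of the violating points, continuity of \<open>\<phi>\<close> gives \<open>\<Sum>\<phi>(c\<^sub>i) < \<infinity>\<close>, so
  \<open>\<alpha> = \<epsilon> = \<delta>\<close> and \<open>c\<close> satisfy the excluded condition. Choosing blocks greedily for
  \<open>\<delta> = 2\<^sup>-\<^sup>n\<close>, each avoiding all earlier ones, gives the theorem.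
\<close>

lemma subset_sum_between:
  fixes g :: "'a \<Rightarrow> real"
  assumes "finite B" "0 \<le> a" "\<And>i. i \<in> B \<Longrightarrow> 0 \<le> g i \<and> g i < a" "a \<le> sum g B"
  shows "\<exists>B'\<subseteq>B. a \<le> sum g B' \<and> sum g B' \<le> 2 * a"
  using assms
proof (induction B rule: finite_induct)
  case empty
  then show ?case by simp
next
  case (insert x B)
  show ?case
  proof (cases "a \<le> sum g B")
    case True
    with insert show ?thesis by blast
  next
    case False
    have "g x < a" using insert.prems(2) by blast
    with False insert.hyps have "sum g (insert x B) \<le> 2 * a" by simp
    with insert show ?thesis by blast
  qed
qed

lemma sum_Sup_le:
  fixes f :: "real \<Rightarrow> real" and S :: "'i \<Rightarrow> real set"
  assumes "finite G" and "continuous_on UNIV f"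
    and "\<And>i. i \<in> G \<Longrightarrow> S i \<noteq> {} \<and> bdd_above (S i)"
    and "\<And>w. (\<And>i. i \<in> G \<Longrightarrow> w i \<in> S i) \<Longrightarrow> (\<Sum>i\<in>G. f (w i)) \<le> b"
  shows "(\<Sum>i\<in>G. f (Sup (S i))) \<le> b"
proof -
  have "\<exists>x. (\<forall>n. x n \<in> S i) \<and> x \<longlonglongrightarrow> Sup (S i)" if "i \<in> G" for i
    using assms(3)[OF that] closure_contains_Sup closure_sequential by metis
  then obtain x where x: "\<And>i n. i \<in> G \<Longrightarrow> x i n \<in> S i" "\<And>i. i \<in> G \<Longrightarrow> x i \<longlonglongrightarrow> Sup (S i)"
    by metis
  have "(\<lambda>n. \<Sum>i\<in>G. f (x i n)) \<longlonglongrightarrow> (\<Sum>i\<in>G. f (Sup (S i)))"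
    using assms(2) x(2) by (intro tendsto_sum) (auto intro: continuous_on_tendsto_compose)
  moreover have "(\<Sum>i\<in>G. f (x i n)) \<le> b" for n
    using x(1) by (intro assms(4))
  ultimately show ?thesis
    by (intro LIMSEQ_le_const2) auto
qed

definition shift_domination :: "(real \<Rightarrow> real) \<Rightarrow> (nat \<Rightarrow> real) \<Rightarrow> bool" where
  "shift_domination \<phi> u0 \<longleftrightarrow> (\<exists>\<alpha> \<epsilon> (c :: nat \<Rightarrow> ereal). 0 < \<alpha> \<and> \<alpha> < 1 \<and> 0 < \<epsilon> \<and>
     (\<forall>i\<ge>1. c i \<noteq> \<infinity>) \<and>
     (\<Sum>\<^sub>\<infinity>i\<in>{1..}. ennreal (phi_ext \<phi> (c i))) < \<infinity> \<and>
     (\<forall>i\<ge>1. \<forall>u::real. ereal u > c i \<and> \<phi> (u - u0 i) < \<epsilon> \<longrightarrow> \<alpha> * \<phi> u \<le> \<phi> (u - u0 i)))"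

definition good_block :: "(real \<Rightarrow> real) \<Rightarrow> (nat \<Rightarrow> real) \<Rightarrow> real \<Rightarrow> nat set \<Rightarrow> (nat \<Rightarrow> real) \<Rightarrow> bool" where
  "good_block \<phi> u0 \<delta> B c \<longleftrightarrow> finite B \<and> B \<subseteq> {1..} \<and>
     1/2 \<le> (\<Sum>i\<in>B. \<phi> (c i)) \<and> (\<Sum>i\<in>B. \<phi> (c i - u0 i)) \<le> \<delta>"

definition shift_violations :: "(real \<Rightarrow> real) \<Rightarrow> (nat \<Rightarrow> real) \<Rightarrow> real \<Rightarrow> nat \<Rightarrow> real set" where
  "shift_violations \<phi> u0 \<delta> i = {u. \<phi> (u - u0 i) < \<delta> \<and> \<phi> (u - u0 i) < \<delta> * \<phi> u}"

lemma deformed_exp_nonneg: "deformed_exp \<phi> \<Longrightarrow> 0 \<le> \<phi> u"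
  by (simp add: deformed_exp_def)

lemma deformed_exp_continuous: "deformed_exp \<phi> \<Longrightarrow> continuous_on UNIV \<phi>"
  by (intro convex_on_continuous) (auto simp: deformed_exp_def)

lemma deformed_exp_eventually_ge:
  assumes "deformed_exp \<phi>"
  obtains x0 where "\<And>x. x0 \<le> x \<Longrightarrow> e \<le> \<phi> x"
proof -
  have "filterlim \<phi> at_top at_top" using assms by (simp add: deformed_exp_def)
  then have "eventually (\<lambda>x. e \<le> \<phi> x) at_top" by (simp add: filterlim_at_top)
  then show ?thesis using that by (auto simp: eventually_at_top_linorder)
qed

lemma bdd_above_shift_violations:
  assumes "deformed_exp \<phi>"
  shows "bdd_above (shift_violations \<phi> u0 \<delta> i)"
proof -
  obtain x0 where x0: "\<And>x. x0 \<le> x \<Longrightarrow> \<delta> \<le> \<phi> x"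
    using deformed_exp_eventually_ge[OF assms] by blast
  have "u \<le> x0 + u0 i" if "u \<in> shift_violations \<phi> u0 \<delta> i" for u
    using that x0[of "u - u0 i"] by (force simp: shift_violations_def)
  then show ?thesis by (rule bdd_aboveI)
qed

lemma sum_shift_violations_lt_half:
  assumes no_block: "\<nexists>B c. B \<inter> E = {} \<and> good_block \<phi> u0 \<delta> B c"
    and nonneg: "\<And>u. 0 \<le> \<phi> u" and "0 \<le> \<delta>"
    and F: "finite F" "F \<subseteq> {1..} - E"
    and w: "\<And>i. i \<in> F \<Longrightarrow> w i \<in> shift_violations \<phi> u0 \<delta> i"
  shows "(\<Sum>i\<in>F. \<phi> (w i)) < 1/2"
proof (rule ccontr)
  assume large: "\<not> (\<Sum>i\<in>F. \<phi> (w i)) < 1/2"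
  have small: "\<phi> (w i) < 1/2" if "i \<in> F" for i
  proof (rule ccontr)
    assume "\<not> ?thesis"
    then have "good_block \<phi> u0 \<delta> {i} w"
      using w[OF that] F that by (auto simp: good_block_def shift_violations_def)
    with no_block that F show False by blast
  qed
  obtain B where B: "B \<subseteq> F" "1/2 \<le> (\<Sum>i\<in>B. \<phi> (w i))" "(\<Sum>i\<in>B. \<phi> (w i)) \<le> 1"
    using subset_sum_between[of F "1/2" "\<lambda>i. \<phi> (w i)"] F(1) small nonneg large by auto
  have "(\<Sum>i\<in>B. \<phi> (w i - u0 i)) \<le> (\<Sum>i\<in>B. \<delta> * \<phi> (w i))"
    using B(1) w by (intro sum_mono) (auto simp: shift_violations_def less_imp_le)
  also have "\<dots> \<le> \<delta>"
    using B(3) \<open>0 \<le> \<delta>\<close> by (simp add: mult_left_le flip: sum_distrib_left)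
  finally have "good_block \<phi> u0 \<delta> B w"
    using B F finite_subset by (auto simp: good_block_def)
  moreover have "B \<inter> E = {}" using B(1) F(2) by blast
  ultimately show False using no_block by blast
qed

lemma good_block_avoiding:
  assumes de: "deformed_exp \<phi>" and no_dom: "\<not> shift_domination \<phi> u0"
    and \<delta>: "0 < \<delta>" "\<delta> < 1" and "finite E"
  shows "\<exists>B c. B \<inter> E = {} \<and> good_block \<phi> u0 \<delta> B c"
proof (rule ccontr)
  assume no_block: "\<not> ?thesis"
  define V where "V = shift_violations \<phi> u0 \<delta>"
  define c where "c i = (if V i = {} then - \<infinity> else ereal (Sup (V i)))" for i
  have nonneg: "0 \<le> \<phi> u" for u using de by (rule deformed_exp_nonneg)
  have bdd: "bdd_above (V i)" for i
    unfolding V_def using de by (rule bdd_above_shift_violations)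
  have dominated: "\<delta> * \<phi> u \<le> \<phi> (u - u0 i)" if "c i < ereal u" "\<phi> (u - u0 i) < \<delta>" for i u
  proof (rule ccontr)
    assume "\<not> ?thesis"
    with that(2) have u: "u \<in> V i" by (simp add: V_def shift_violations_def)
    then have "V i \<noteq> {}" by blast
    then have "ereal (Sup (V i)) < ereal u" using that(1) by (simp add: c_def)
    moreover have "u \<le> Sup (V i)" using bdd u by (rule cSup_upper[rotated])
    ultimately show False by simp
  qed
  have phi_ext_nonneg: "0 \<le> phi_ext \<phi> x" for x
    using nonneg by (simp add: phi_ext_def)
  define K where "K = (\<Sum>i\<in>E. phi_ext \<phi> (c i))"
  have finite_sums: "(\<Sum>i\<in>F. ennreal (phi_ext \<phi> (c i))) \<le> ennreal (K + 1/2)"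
    if F: "finite F" "F \<subseteq> {1..}" for F
  proof -
    define G where "G = {i \<in> F - E. V i \<noteq> {}}"
    have G: "finite G" "G \<subseteq> {1..} - E" using F by (auto simp: G_def)
    have "(\<Sum>i\<in>G. \<phi> (Sup (V i))) \<le> 1/2"
    proof (rule sum_Sup_le)
      fix w assume "\<And>i. i \<in> G \<Longrightarrow> w i \<in> V i"
      then have "(\<Sum>i\<in>G. \<phi> (w i)) < 1/2"
        using sum_shift_violations_lt_half[OF no_block nonneg _ G] \<delta>(1) by (simp add: V_def)
      then show "(\<Sum>i\<in>G. \<phi> (w i)) \<le> 1/2" by simp
    qed (use G bdd deformed_exp_continuous[OF de] in \<open>simp_all add: G_def\<close>)
    moreover have "(\<Sum>i\<in>F - E. phi_ext \<phi> (c i)) = (\<Sum>i\<in>G. \<phi> (Sup (V i)))"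
      by (rule sum.mono_neutral_cong_right) (use F in \<open>auto simp: G_def c_def phi_ext_def\<close>)
    moreover have "(\<Sum>i\<in>F \<inter> E. phi_ext \<phi> (c i)) \<le> K"
      unfolding K_def using \<open>finite E\<close> phi_ext_nonneg by (intro sum_mono2) auto
    ultimately have sum_le: "(\<Sum>i\<in>F. phi_ext \<phi> (c i)) \<le> K + 1/2"
      using F by (simp add: sum.Int_Diff[of F _ E])
    have "(\<Sum>i\<in>F. ennreal (phi_ext \<phi> (c i))) = ennreal (\<Sum>i\<in>F. phi_ext \<phi> (c i))"
      using phi_ext_nonneg by simp
    also have "\<dots> \<le> ennreal (K + 1/2)" using sum_le by (rule ennreal_leI)
    finally show ?thesis .
  qed
  have "(\<Sum>\<^sub>\<infinity>i\<in>{1..}. ennreal (phi_ext \<phi> (c i))) \<le> ennreal (K + 1/2)"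
    using finite_sums by (intro infsum_le_finite_sums nonneg_summable_on_complete) auto
  then have "(\<Sum>\<^sub>\<infinity>i\<in>{1..}. ennreal (phi_ext \<phi> (c i))) < \<infinity>"
    using ennreal_less_top le_less_trans by (metis infinity_ennreal_def)
  moreover have "c i \<noteq> \<infinity>" for i by (simp add: c_def)
  ultimately have "shift_domination \<phi> u0"
    unfolding shift_domination_def using \<delta> dominated
    by (intro exI[of _ \<delta>] exI[of _ \<delta>] exI[of _ c]) auto
  with no_dom show False by contradiction
qed

lemma good_block_infsum:
  assumes "good_block \<phi> u0 \<delta> B c" and "\<And>u. 0 \<le> \<phi> u"
  shows "1/2 \<le> (\<Sum>\<^sub>\<infinity>i\<in>B. ennreal (\<phi> (c i)))"
    and "(\<Sum>\<^sub>\<infinity>i\<in>B. ennreal (\<phi> (c i - u0 i))) \<le> ennreal \<delta>"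
proof -
  have "finite B" using assms(1) by (simp add: good_block_def)
  then have sums: "(\<Sum>\<^sub>\<infinity>i\<in>B. ennreal (\<phi> (c i))) = ennreal (\<Sum>i\<in>B. \<phi> (c i))"
    "(\<Sum>\<^sub>\<infinity>i\<in>B. ennreal (\<phi> (c i - u0 i))) = ennreal (\<Sum>i\<in>B. \<phi> (c i - u0 i))"
    using assms(2) by simp_all
  have half: "(1/2 :: ennreal) = ennreal (1/2)"
    using divide_ennreal[of 1 2] by simp
  show "1/2 \<le> (\<Sum>\<^sub>\<infinity>i\<in>B. ennreal (\<phi> (c i)))"
    unfolding half sums using assms(1) by (intro ennreal_leI) (simp add: good_block_def)
  show "(\<Sum>\<^sub>\<infinity>i\<in>B. ennreal (\<phi> (c i - u0 i))) \<le> ennreal \<delta>"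
    using assms(1) by (simp add: sums good_block_def ennreal_leI)
qed

primrec greedy_union :: "(nat \<Rightarrow> 'a set \<Rightarrow> 'a set) \<Rightarrow> nat \<Rightarrow> 'a set" where
  "greedy_union g 0 = {}"
| "greedy_union g (Suc n) = greedy_union g n \<union> g (Suc n) (greedy_union g n)"

lemma greedy_union_mono: "m \<le> n \<Longrightarrow> greedy_union g m \<subseteq> greedy_union g n"
  by (induction n) (auto simp: le_Suc_eq)

lemma disjoint_family_avoiding:
  fixes P :: "nat \<Rightarrow> 'a set \<Rightarrow> bool"
  assumes "\<And>k E. 1 \<le> k \<Longrightarrow> finite E \<Longrightarrow> \<exists>B. finite B \<and> B \<inter> E = {} \<and> P k B"
  shows "\<exists>A. (\<forall>n\<ge>1. P n (A n)) \<and> (\<forall>n\<ge>1. \<forall>m\<ge>1. n \<noteq> m \<longrightarrow> A n \<inter> A m = {})"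
proof -
  obtain g where g: "\<And>k E. 1 \<le> k \<Longrightarrow> finite E \<Longrightarrow> finite (g k E) \<and> g k E \<inter> E = {} \<and> P k (g k E)"
    using assms by metis
  define U where "U = greedy_union g"
  have finite_U: "finite (U n)" for n
    by (induction n) (simp_all add: U_def g)
  define A where "A n = g n (U (n - 1))" for n
  have A: "P n (A n)" "A n \<inter> U (n - 1) = {}" if "1 \<le> n" for n
    using g[OF that finite_U] by (simp_all add: A_def)
  have A_U: "A n \<subseteq> U m" if "1 \<le> n" "n \<le> m" for n m
  proof -
    obtain k where "n = Suc k" using \<open>1 \<le> n\<close> by (cases n) auto
    then have "A n \<subseteq> U n" by (simp add: A_def U_def)
    also have "\<dots> \<subseteq> U m" unfolding U_def using \<open>n \<le> m\<close> by (rule greedy_union_mono)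
    finally show ?thesis .
  qed
  have "A n \<inter> A m = {}" if "1 \<le> n" "n < m" for n m
  proof -
    have "A n \<subseteq> U (m - 1)" using that by (intro A_U) auto
    with A(2)[of m] that show ?thesis by auto
  qed
  then have "A n \<inter> A m = {}" if "1 \<le> n" "1 \<le> m" "n \<noteq> m" for n m
    using that by (metis Int_commute linorder_neqE_nat)
  with A(1) show ?thesis by blast
qed

theorem mainTheorem10:
  fixes \<phi> :: "real \<Rightarrow> real" and u0 :: "nat \<Rightarrow> real"
  assumes "deformed_exp \<phi>"
    and "\<forall>i\<ge>1. 0 < u0 i"
    and "\<not> (\<exists>\<alpha> \<epsilon> (c :: nat \<Rightarrow> ereal). 0 < \<alpha> \<and> \<alpha> < 1 \<and> 0 < \<epsilon> \<and>
             (\<forall>i\<ge>1. c i \<noteq> \<infinity>) \<and>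
             (\<Sum>\<^sub>\<infinity>i\<in>{1..}. ennreal (phi_ext \<phi> (c i))) < \<infinity> \<and>
             (\<forall>i\<ge>1. \<forall>u::real. ereal u > c i \<and> \<phi> (u - u0 i) < \<epsilon> \<longrightarrow>
                 \<alpha> * \<phi> u \<le> \<phi> (u - u0 i)))"
  shows "\<exists>(A :: nat \<Rightarrow> nat set) (c :: nat \<Rightarrow> nat \<Rightarrow> real).
           (\<forall>n\<ge>1. A n \<subseteq> {1..}) \<and>
           (\<forall>n\<ge>1. \<forall>m\<ge>1. n \<noteq> m \<longrightarrow> A n \<inter> A m = {}) \<and>
           (\<forall>n\<ge>1. 1/2 \<le> (\<Sum>\<^sub>\<infinity>i\<in>A n. ennreal (\<phi> (c n i))) \<and>
                   (\<Sum>\<^sub>\<infinity>i\<in>A n. ennreal (\<phi> (c n i - u0 i))) \<le> ennreal (1 / 2 ^ n))"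
proof -
  have nonneg: "\<And>u. 0 \<le> \<phi> u" using assms(1) by (rule deformed_exp_nonneg)
  have no_dom: "\<not> shift_domination \<phi> u0"
    using assms(3) unfolding shift_domination_def .
  have "\<exists>B. finite B \<and> B \<inter> E = {} \<and> (\<exists>c. good_block \<phi> u0 (1 / 2 ^ k) B c)"
    if "1 \<le> k" "finite E" for k E
  proof -
    have "(1::real) / 2 ^ k < 1" using \<open>1 \<le> k\<close> by simp
    then obtain B c where "B \<inter> E = {}" "good_block \<phi> u0 (1 / 2 ^ k) B c"
      using good_block_avoiding[OF assms(1) no_dom, of "1 / 2 ^ k" E] \<open>finite E\<close> by auto
    then show ?thesis by (auto simp: good_block_def)
  qed
  then obtain A where A: "\<forall>n\<ge>1. \<exists>c. good_block \<phi> u0 (1 / 2 ^ n) (A n) c"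
      "\<forall>n\<ge>1. \<forall>m\<ge>1. n \<noteq> m \<longrightarrow> A n \<inter> A m = {}"
    using disjoint_family_avoiding[of "\<lambda>k B. \<exists>c. good_block \<phi> u0 (1 / 2 ^ k) B c"] by blast
  then obtain c where c: "\<And>n. 1 \<le> n \<Longrightarrow> good_block \<phi> u0 (1 / 2 ^ n) (A n) (c n)"
    by metis
  have "A n \<subseteq> {1..}" if "1 \<le> n" for n
    using c[OF that] by (simp add: good_block_def)
  with A(2) good_block_infsum[OF c nonneg] show ?thesis
    by (intro exI[of _ A] exI[of _ c]) blast
qed

end
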